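(* Let $\lambda\in X^+$ be a $p$-core. Let $\alpha=\varepsilon_i+\varepsilon_j$ with $1\le i<j\le l(\lambda)$ and integers $a,l\ge1$ with $\langle\lambda+\rho,\alpha^\vee\rangle=a+lp$, $(\lambda+\rho)_j-a>0$ and $\chi(s_{\alpha,l}\cdot\lambda)\ne0$. Then the entries of $s_{\alpha,l}(\lambda+\rho)$ are distinct and strictly positive. Put $\mu_\alpha=\mathrm{sort}(s_{\alpha,l}(\lambda+\rho))-\rho$. Then $\mu_\alpha$ is a partition with $\mu_\alpha\subsetneq\lambda$, and $\mu_\alpha$ is conjugate to $\lambda$ under the dot action of $W_p(D_{l(\lambda)})$. Furthermore, the map $(\alpha,l)\mapsto\mu_\alpha$, defined on the set of all such pairs $(\alpha,l)$, is injective.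
   Context: Setup: $p>2$ is a prime, $m\ge1$, weight lattice $X=\mathbb Z^m$ of $\mathrm{Sp}_{2m}$ with standard basis $\varepsilon_i$, standard inner product, $\alpha^\vee=2\alpha/\langle\alpha,\alpha\rangle$. $X^+=\{\lambda\in\mathbb Z^m:\lambda_1\ge\dots\ge\lambda_m\ge0\}$ (partitions with at most $m$ parts); $l(\lambda)$ is the number of nonzero entries. $\rho=(m,m-1,\dots,1)$. $s_{\alpha,l}(x)=x-(\langle x,\alpha^\vee\rangle-lp)\alpha$, $w\cdot x=w(x+\rho)-\rho$. $\chi(\mu)$ is the Weyl character; $\chi(\mu)=0$ iff some entry of $\mu+\rho$ is $0$ or two entries are equal up to sign. A $p$-core is $\lambda\in X^+$ such that for all $i$ and all integers $l\ge1$ with $(\lambda+\rho)_i-lp>0$, the number $(\lambda+\rho)_i-lp$ occurs as an entry of $\lambda+\rho$. $\mathrm{sort}(\mu)$ is the weakly decreasing rearrangement of $\mu\in\mathbb Z^m$; $\mu\subseteq\nu$ means $\mu_i\le\nu_i$ for all $i$. For $1\le t\le m$, $W_p(D_t)$ is the group of affine transformations of $\mathbb R^m$ generated by the $s_{\alpha,l}$ with $\alpha=\varepsilon_i\pm\varepsilon_j$, $1\le i<j\le t$, $l\in\mathbb Z$. *)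

theory Defs
  imports Main "HOL-Computational_Algebra.Primes"
begin

(* Weights in X = Z^m are int lists of length m; entry k (0-based) is the
   coefficient of epsilon_(k+1). *)

definition vadd :: "int list \<Rightarrow> int list \<Rightarrow> int list" where
  "vadd x y = map2 (+) x y"

definition vsub :: "int list \<Rightarrow> int list \<Rightarrow> int list" where
  "vsub x y = map2 (-) x y"

definition smul :: "int \<Rightarrow> int list \<Rightarrow> int list" where
  "smul c x = map ((*) c) x"

definition winner :: "int list \<Rightarrow> int list \<Rightarrow> int" where
  "winner x y = sum_list (map2 (*) x y)"

(* <x, alpha^vee> with alpha^vee = 2 alpha / <alpha,alpha>; integral for roots of C_m *)
definition coroot_pair :: "int list \<Rightarrow> int list \<Rightarrow> int" where
  "coroot_pair x \<alpha> = (2 * winner x \<alpha>) div winner \<alpha> \<alpha>"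

definition refl_aff :: "nat \<Rightarrow> int list \<Rightarrow> int \<Rightarrow> int list \<Rightarrow> int list" where
  "refl_aff p \<alpha> l x = vsub x (smul (coroot_pair x \<alpha> - l * int p) \<alpha>)"

definition eps :: "nat \<Rightarrow> nat \<Rightarrow> int list" where
  "eps m i = map (\<lambda>k. if k = i then 1 else 0) [0..<m]"

definition rho :: "nat \<Rightarrow> int list" where
  "rho m = map (\<lambda>k. int (m - k)) [0..<m]"

definition dot :: "(int list \<Rightarrow> int list) \<Rightarrow> int list \<Rightarrow> nat \<Rightarrow> int list" where
  "dot w x m = vsub (w (vadd x (rho m))) (rho m)"

definition dominant :: "nat \<Rightarrow> int list \<Rightarrow> bool" where
  "dominant m lam \<longleftrightarrow> length lam = m \<and> sorted_wrt (\<ge>) lam \<and> (\<forall>x\<in>set lam. 0 \<le> x)"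

definition lpart :: "int list \<Rightarrow> nat" where
  "lpart lam = length (filter (\<lambda>x. x \<noteq> 0) lam)"

(* chi(mu) = 0 iff some entry of mu+rho is 0 or two entries are equal up to sign *)
definition weyl_char_zero :: "nat \<Rightarrow> int list \<Rightarrow> bool" where
  "weyl_char_zero m \<mu> \<longleftrightarrow>
     (let v = vadd \<mu> (rho m) in
       (\<exists>i<m. v ! i = 0) \<or> (\<exists>i<m. \<exists>j<m. i \<noteq> j \<and> \<bar>v ! i\<bar> = \<bar>v ! j\<bar>))"

definition p_core :: "nat \<Rightarrow> nat \<Rightarrow> int list \<Rightarrow> bool" where
  "p_core p m lam \<longleftrightarrow> dominant m lam \<and>
     (let v = vadd lam (rho m) in
       \<forall>i<m. \<forall>l::int. l \<ge> 1 \<longrightarrow> v ! i - l * int p > 0 \<longrightarrow> v ! i - l * int p \<in> set v)"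

definition sort_desc :: "int list \<Rightarrow> int list" where
  "sort_desc xs = rev (sort xs)"

definition wsubseteq :: "int list \<Rightarrow> int list \<Rightarrow> bool" where
  "wsubseteq \<mu> \<nu> \<longleftrightarrow> list_all2 (\<le>) \<mu> \<nu>"

(* The generators are involutions, so closure under composition with generators
   (starting from the identity) is the generated group. *)
inductive_set WpD :: "nat \<Rightarrow> nat \<Rightarrow> nat \<Rightarrow> (int list \<Rightarrow> int list) set"
  for p :: nat and m :: nat and t :: nat where
  WpD_id: "id \<in> WpD p m t"
| WpD_step: "\<lbrakk> w \<in> WpD p m t; i < j; j < t;
              \<alpha> = vadd (eps m i) (eps m j) \<or> \<alpha> = vsub (eps m i) (eps m j) \<rbrakk>
             \<Longrightarrow> refl_aff p \<alpha> l \<circ> w \<in> WpD p m t"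

end

theory Submission
  imports Defs
begin

text \<open>Write \<open>v = \<lambda> + \<rho>\<close>: a strictly decreasing list of positive integers whose entries beyond
  position \<open>l(\<lambda>)\<close> are \<open>m - l(\<lambda>), \<dots>, 1\<close>. For \<open>\<alpha> = \<epsilon>\<^sub>i + \<epsilon>\<^sub>j\<close> the reflection \<open>s\<^sub>\<alpha>\<^sub>,\<^sub>l\<close> lowers \<open>v\<^sub>i\<close>
  and \<open>v\<^sub>j\<close> by \<open>a\<close> and fixes the other entries; \<open>\<chi> \<noteq> 0\<close> makes the result distinct and
  \<open>v\<^sub>j - a > 0\<close> makes it positive. Its tail still fills \<open>1, \<dots>, m - l(\<lambda>)\<close>, so sorting only permutes
  the first \<open>l(\<lambda>)\<close> coordinates, which the reflections in \<open>\<epsilon>\<^sub>i - \<epsilon>\<^sub>j\<close> do; hence \<open>\<mu>\<^sub>\<alpha>\<close> lies in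
  the dot orbit of \<open>\<lambda>\<close>. Sorting a list dominated entrywise by the decreasing \<open>v\<close> keeps it
  dominated, which gives \<open>\<mu>\<^sub>\<alpha> \<subseteq> \<lambda>\<close>, and the entry sum drops by \<open>2a\<close>, so \<open>\<mu>\<^sub>\<alpha> \<noteq> \<lambda>\<close>.
  Finally the set of entries recovers \<open>(i, j, a)\<close>, and \<open>l\<close> is then fixed by
  \<open>\<langle>v, \<alpha>\<^sup>\<vee>\<rangle> = a + l p\<close>.\<close>

section \<open>Coordinates and reflections\<close>

lemma length_vadd [simp]: "length (vadd x y) = min (length x) (length y)"
  by (simp add: vadd_def)

lemma length_vsub [simp]: "length (vsub x y) = min (length x) (length y)"
  by (simp add: vsub_def)

lemma length_smul [simp]: "length (smul c x) = length x"
  by (simp add: smul_def)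

lemma length_eps [simp]: "length (eps m i) = m"
  by (simp add: eps_def)

lemma length_rho [simp]: "length (rho m) = m"
  by (simp add: rho_def)

lemma nth_vadd [simp]: "k < length x \<Longrightarrow> k < length y \<Longrightarrow> vadd x y ! k = x ! k + y ! k"
  by (simp add: vadd_def)

lemma nth_vsub [simp]: "k < length x \<Longrightarrow> k < length y \<Longrightarrow> vsub x y ! k = x ! k - y ! k"
  by (simp add: vsub_def)

lemma nth_smul [simp]: "k < length x \<Longrightarrow> smul c x ! k = c * x ! k"
  by (simp add: smul_def)

lemma nth_eps [simp]: "k < m \<Longrightarrow> eps m i ! k = (if k = i then 1 else 0)"
  by (simp add: eps_def)

lemma nth_rho [simp]: "k < m \<Longrightarrow> rho m ! k = int (m - k)"
  by (simp add: rho_def)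

lemma vsub_rho_inj: "length x = m \<Longrightarrow> length y = m \<Longrightarrow> vsub x (rho m) = vsub y (rho m) \<Longrightarrow> x = y"
  by (metis diff_add_cancel length_vsub min.idem nth_equalityI nth_vsub length_rho)

lemma winner_conv_sum: "length x = length y \<Longrightarrow> winner x y = (\<Sum>k<length x. x ! k * y ! k)"
  by (simp add: winner_def sum_list_sum_nth atLeast0LessThan)

lemma winner_vadd_right:
  "length y = length x \<Longrightarrow> length z = length x \<Longrightarrow> winner x (vadd y z) = winner x y + winner x z"
  by (simp add: winner_conv_sum algebra_simps sum.distrib)

lemma winner_vsub_right:
  "length y = length x \<Longrightarrow> length z = length x \<Longrightarrow> winner x (vsub y z) = winner x y - winner x z"
  by (simp add: winner_conv_sum algebra_simps sum_subtractf)

lemma winner_eps_right: "length x = m \<Longrightarrow> i < m \<Longrightarrow> winner x (eps m i) = x ! i"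
  by (simp add: winner_conv_sum if_distrib cong: if_cong)

lemma coroot_pair_eps_add:
  assumes "length x = m" "i < m" "j < m" "i \<noteq> j"
  shows "coroot_pair x (vadd (eps m i) (eps m j)) = x ! i + x ! j"
  using assms by (simp add: coroot_pair_def winner_vadd_right winner_eps_right)

lemma coroot_pair_eps_diff:
  assumes "length x = m" "i < m" "j < m" "i \<noteq> j"
  shows "coroot_pair x (vsub (eps m i) (eps m j)) = x ! i - x ! j"
  using assms by (simp add: coroot_pair_def winner_vsub_right winner_eps_right)

definition lower_pair :: "int list \<Rightarrow> nat \<Rightarrow> nat \<Rightarrow> int \<Rightarrow> int list" where
  "lower_pair x i j a = x[i := x ! i - a, j := x ! j - a]"

lemma refl_aff_eps_add:
  assumes "length x = m" "i < m" "j < m" "i \<noteq> j"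
  shows "refl_aff p (vadd (eps m i) (eps m j)) l x = lower_pair x i j (x ! i + x ! j - l * int p)"
  using assms
  by (intro nth_equalityI) (auto simp: refl_aff_def lower_pair_def coroot_pair_eps_add nth_list_update)

lemma refl_aff_eps_diff:
  assumes "length x = m" "i < m" "j < m" "i \<noteq> j"
  shows "refl_aff p (vsub (eps m i) (eps m j)) 0 x = x[i := x ! j, j := x ! i]"
  using assms by (intro nth_equalityI) (auto simp: refl_aff_def coroot_pair_eps_diff nth_list_update)

section \<open>The groups \<open>W\<^sub>p(D\<^sub>t)\<close>\<close>

lemma WpD_comp: "w' \<in> WpD p m t \<Longrightarrow> w \<in> WpD p m t \<Longrightarrow> w' \<circ> w \<in> WpD p m t"
proof (induction rule: WpD.induct)
  case WpD_id
  then show ?case by simp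
next
  case (WpD_step w' i j \<alpha> l)
  then show ?case by (metis WpD.WpD_step comp_assoc)
qed

lemma WpD_mono: "w \<in> WpD p m t \<Longrightarrow> t \<le> t' \<Longrightarrow> w \<in> WpD p m t'"
  by (induction rule: WpD.induct) (auto intro: WpD.WpD_id WpD.WpD_step[where t = t'])

lemma refl_aff_in_WpD:
  "i < j \<Longrightarrow> j < t \<Longrightarrow> \<alpha> = vadd (eps m i) (eps m j) \<or> \<alpha> = vsub (eps m i) (eps m j)
    \<Longrightarrow> refl_aff p \<alpha> l \<in> WpD p m t"
  by (metis WpD_step WpD_id comp_id)

lemma WpD_permutes_prefix:
  assumes "t \<le> m" "length x = m" "length y = m" "distinct y" "set x = set y"
    and "\<forall>k. t \<le> k \<longrightarrow> k < m \<longrightarrow> x ! k = y ! k"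
  shows "\<exists>w \<in> WpD p m t. w x = y"
  using assms
proof (induction t arbitrary: x)
  case 0
  then have "x = y" by (simp add: list_eq_iff_nth_eq)
  then show ?case using WpD.WpD_id by (metis id_apply)
next
  case (Suc t)
  have tm: "t < m" using Suc.prems(1) by simp
  obtain q where q: "q < m" "x ! q = y ! t"
    using Suc.prems(2,3,5) tm by (metis in_set_conv_nth nth_mem)
  have "q \<le> t"
  proof (rule ccontr)
    assume "\<not> q \<le> t"
    then have "y ! q = y ! t" using Suc.prems(6) q by simp
    then show False using Suc.prems(3,4) q(1) tm \<open>\<not> q \<le> t\<close> by (simp add: nth_eq_iff_index_eq)
  qed
  define x' where "x' = x[q := x ! t, t := x ! q]"
  have "\<forall>k. t \<le> k \<longrightarrow> k < m \<longrightarrow> x' ! k = y ! k"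
    using Suc.prems(2,6) q \<open>q \<le> t\<close> by (auto simp: x'_def nth_list_update)
  moreover have "set x' = set y" "length x' = m"
    using Suc.prems(2,5) \<open>q \<le> t\<close> tm by (simp_all add: x'_def)
  ultimately obtain w where w: "w \<in> WpD p m t" "w x' = y"
    using Suc.IH[of x'] Suc.prems(3,4) tm by auto
  show ?case
  proof (cases "q = t")
    case True
    then have "x' = x" by (simp add: x'_def)
    then show ?thesis using w WpD_mono[OF w(1)] by auto
  next
    case False
    with \<open>q \<le> t\<close> have "q < t" by simp
    define \<sigma> where "\<sigma> = refl_aff p (vsub (eps m q) (eps m t)) 0"
    have "\<sigma> x = x'"
      unfolding \<sigma>_def x'_def using Suc.prems(2) \<open>q < t\<close> tm by (intro refl_aff_eps_diff) auto
    moreover have "\<sigma> \<in> WpD p m (Suc t)"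
      unfolding \<sigma>_def using \<open>q < t\<close> by (intro refl_aff_in_WpD) auto
    then have "w \<circ> \<sigma> \<in> WpD p m (Suc t)"
      using WpD_comp WpD_mono[OF w(1)] by simp
    ultimately show ?thesis using w(2) by (intro bexI[of _ "w \<circ> \<sigma>"]) simp_all
  qed
qed

section \<open>Decreasing rearrangement\<close>

lemma sorted_wrt_gt_distinct: "sorted_wrt (>) xs \<Longrightarrow> distinct (xs :: 'a :: linorder list)"
  by (metis distinct_rev sorted_wrt_rev strict_sorted_iff)

lemma sorted_wrt_gt_nth_gap:
  assumes "sorted_wrt (>) (xs :: int list)" "k \<le> k'" "k' < length xs"
  shows "xs ! k' + int (k' - k) \<le> xs ! k"
  using assms(2,3)
proof (induction k' rule: dec_induct)
  case (step n)
  then have "xs ! Suc n < xs ! n" using sorted_wrt_nth_less[OF assms(1)] by simp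
  with step show ?case by auto
qed simp

lemma card_ge_nth_sorted_wrt_gt:
  assumes "sorted_wrt (>) (xs :: 'a :: linorder list)" "k < length xs"
  shows "card {x \<in> set xs. xs ! k \<le> x} = Suc k"
proof -
  have "{x \<in> set xs. xs ! k \<le> x} = nth xs ` {..k}"
  proof (intro equalityI subsetI)
    fix x assume "x \<in> {x \<in> set xs. xs ! k \<le> x}"
    then obtain q where q: "q < length xs" "x = xs ! q" "xs ! k \<le> xs ! q"
      by (auto simp: in_set_conv_nth)
    then have "\<not> k < q" using sorted_wrt_nth_less[OF assms(1), of k q] leD by blast
    with q show "x \<in> nth xs ` {..k}" by auto
  next
    fix x assume "x \<in> nth xs ` {..k}"
    then obtain q where "q \<le> k" "x = xs ! q" by auto
    with assms sorted_wrt_nth_less[OF assms(1), of q k] show "x \<in> {x \<in> set xs. xs ! k \<le> x}"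
      by (cases "q = k") auto
  qed
  moreover have "inj_on (nth xs) {..k}"
    using assms sorted_wrt_gt_distinct[OF assms(1)] by (intro inj_on_nth) auto
  ultimately show ?thesis by (simp add: card_image)
qed

lemma length_sort_desc [simp]: "length (sort_desc xs) = length xs"
  by (simp add: sort_desc_def)

lemma set_sort_desc [simp]: "set (sort_desc xs) = set xs"
  by (simp add: sort_desc_def)

lemma mset_sort_desc [simp]: "mset (sort_desc xs) = mset xs"
  by (simp add: sort_desc_def)

lemma sorted_wrt_gt_sort_desc: "distinct xs \<Longrightarrow> sorted_wrt (>) (sort_desc xs)"
  by (simp add: sort_desc_def sorted_wrt_rev strict_sorted_iff)

lemma sort_desc_id: "sorted_wrt (\<ge>) xs \<Longrightarrow> sort_desc xs = xs"
  by (metis mset_rev properties_for_sort rev_rev_ident sort_desc_def sorted_wrt_rev)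

lemma sort_desc_append:
  assumes "\<forall>x \<in> set xs. \<forall>y \<in> set ys. y \<le> x"
  shows "sort_desc (xs @ ys) = sort_desc xs @ sort_desc ys"
proof -
  have "sort (xs @ ys) = sort ys @ sort xs"
    using assms by (intro properties_for_sort) (auto simp: sorted_append)
  then show ?thesis by (simp add: sort_desc_def)
qed

lemma sum_list_sort_desc: "sum_list (sort_desc xs) = sum_list xs"
  by (metis mset_sort_desc sum_mset_sum_list)

text \<open>The \<open>k\<close>-th largest entry of \<open>s\<close> is at most \<open>v ! k\<close>: otherwise \<open>k + 1\<close> entries of \<open>s\<close>, hence
  \<open>k + 1\<close> entries of \<open>v\<close>, would exceed \<open>v ! k\<close>.\<close>

lemma sort_desc_nth_le:
  assumes v: "sorted_wrt (>) v" and "length s = length v" "distinct s"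
    and le: "\<forall>q < length v. s ! q \<le> v ! q" and k: "k < length v"
  shows "sort_desc s ! k \<le> v ! k"
proof (rule ccontr)
  define t where "t = sort_desc s ! k"
  assume "\<not> t \<le> v ! k"
  have "Suc k = card {x \<in> set s. t \<le> x}"
    using card_ge_nth_sorted_wrt_gt[of "sort_desc s" k] assms
    by (simp add: t_def sorted_wrt_gt_sort_desc)
  also have "{x \<in> set s. t \<le> x} = nth s ` {q. q < length v \<and> t \<le> s ! q}"
    using assms(2) by (auto simp: in_set_conv_nth)
  also have "card \<dots> \<le> card {q. q < length v \<and> t \<le> s ! q}"
    by (rule card_image_le) simp
  also have "\<dots> \<le> card {q. q < length v \<and> t \<le> v ! q}"
    using le by (intro card_mono) force+
  also have "\<dots> \<le> card {..<k}"
  proof (intro card_mono subsetI)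
    fix q assume q: "q \<in> {q. q < length v \<and> t \<le> v ! q}"
    show "q \<in> {..<k}"
    proof (rule ccontr)
      assume "q \<notin> {..<k}"
      then have "v ! q \<le> v ! k" using q sorted_wrt_nth_less[OF v, of k q] by (cases "q = k") auto
      with q \<open>\<not> t \<le> v ! k\<close> show False by simp
    qed
  qed simp
  finally show False by simp
qed

text \<open>The tail takes every value \<open>1, \<dots>, length s - t\<close>, so by distinctness and positivity
  every entry of the head is larger than every entry of the tail.\<close>

lemma sort_desc_keeps_tail:
  assumes "distinct s" "\<forall>x \<in> set s. 0 < x" "t \<le> length s"
    and tail: "\<forall>k. t \<le> k \<longrightarrow> k < length s \<longrightarrow> s ! k = int (length s - k)"
  shows "sort_desc s = sort_desc (take t s) @ drop t s"
proof -
  have nth_drop: "drop t s ! q = int (length s - t - q)" if "q < length s - t" for q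
    using tail that by simp
  have "\<forall>x \<in> set (take t s). \<forall>y \<in> set (drop t s). y \<le> x"
  proof (intro ballI)
    fix x y assume x: "x \<in> set (take t s)" and y: "y \<in> set (drop t s)"
    have "y \<le> int (length s - t)"
      using y nth_drop by (auto simp: in_set_conv_nth)
    moreover have "\<not> x \<le> int (length s - t)"
    proof
      assume "x \<le> int (length s - t)"
      moreover have "0 < x" using x assms(2) by (meson in_set_takeD)
      ultimately have "length s - t - nat x < length (drop t s)"
        and "x = drop t s ! (length s - t - nat x)"
        using nth_drop[of "length s - t - nat x"] by simp_all
      then have "x \<in> set (drop t s)" by (metis nth_mem)
      with x assms(1) show False
        by (metis append_take_drop_id disjoint_iff distinct_append)
    qed
    ultimately show "y \<le> x" by simp
  qed
  moreover have "sorted_wrt (\<ge>) (drop t s)"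
    unfolding sorted_wrt_iff_nth_less using nth_drop by simp
  ultimately show ?thesis
    by (metis append_take_drop_id sort_desc_append sort_desc_id)
qed

section \<open>The weight \<open>\<lambda> + \<rho>\<close>\<close>

lemma lpart_le_length: "lpart lam \<le> length lam"
  unfolding lpart_def by simp

lemma nth_ge_lpart_eq_0:
  assumes dom: "dominant m lam" and k: "lpart lam \<le> k" "k < m"
  shows "lam ! k = 0"
proof (rule ccontr)
  assume "lam ! k \<noteq> 0"
  have len: "length lam = m" using dom by (simp add: dominant_def)
  have "lam ! q \<noteq> 0" if "q \<le> k" for q
  proof -
    have "lam ! k \<le> lam ! q"
      using dom that k len by (cases "q = k") (auto simp: dominant_def sorted_wrt_iff_nth_less)
    moreover have "0 \<le> lam ! k" using dom k len by (auto simp: dominant_def)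
    ultimately show ?thesis using \<open>lam ! k \<noteq> 0\<close> by simp
  qed
  then have "{..k} \<subseteq> {q. q < length lam \<and> lam ! q \<noteq> 0}" using k len by auto
  then have "card {..k} \<le> lpart lam"
    unfolding lpart_def length_filter_conv_card by (intro card_mono) auto
  with k show False by simp
qed

lemma length_vadd_rho: "dominant m lam \<Longrightarrow> length (vadd lam (rho m)) = m"
  by (simp add: dominant_def)

lemma nth_vadd_rho: "dominant m lam \<Longrightarrow> k < m \<Longrightarrow> vadd lam (rho m) ! k = lam ! k + int (m - k)"
  by (simp add: dominant_def)

lemma sorted_wrt_gt_vadd_rho: "dominant m lam \<Longrightarrow> sorted_wrt (>) (vadd lam (rho m))"
proof (unfold sorted_wrt_iff_nth_less, intro allI impI)
  fix i j assume ij: "i < j" "j < length (vadd lam (rho m))"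
  moreover assume dom: "dominant m lam"
  ultimately have "lam ! j \<le> lam ! i" by (auto simp: dominant_def sorted_wrt_iff_nth_less)
  with ij dom show "vadd lam (rho m) ! j < vadd lam (rho m) ! i"
    by (simp add: length_vadd_rho nth_vadd_rho)
qed

lemma nth_vadd_rho_pos:
  assumes "dominant m lam" "k < m"
  shows "0 < vadd lam (rho m) ! k"
proof -
  have "0 \<le> lam ! k" using assms nth_mem[of k lam] by (simp add: dominant_def)
  with assms show ?thesis by (simp add: nth_vadd_rho)
qed

lemma dominant_vsub_rho:
  assumes "sorted_wrt (>) y" "\<forall>x \<in> set y. 0 < x" "length y = m"
  shows "dominant m (vsub y (rho m))"
proof -
  have gap: "y ! k' + int (k' - k) \<le> y ! k" if "k \<le> k'" "k' < m" for k k'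
    using sorted_wrt_gt_nth_gap assms that by blast
  have "0 < y ! (m - 1)" "m - 1 < m" if "0 < m"
    using assms that nth_mem[of "m - 1" y] by simp_all
  then have "int (m - k) \<le> y ! k" if "k < m" for k
    using gap[of k "m - 1"] that by fastforce
  moreover have "y ! j - int (m - j) \<le> y ! i - int (m - i)" if "i < j" "j < m" for i j
    using gap[of i j] that by simp
  ultimately show ?thesis
    using assms(3) by (auto simp: dominant_def sorted_wrt_iff_nth_less in_set_conv_nth)
qed

lemma distinct_of_not_weyl_char_zero:
  assumes "length x = m" "\<not> weyl_char_zero m (vsub x (rho m))"
  shows "distinct x"
proof -
  have "vadd (vsub x (rho m)) (rho m) = x"
    using assms(1) by (intro nth_equalityI) simp_all
  with assms show ?thesis
    unfolding weyl_char_zero_def Let_def distinct_conv_nth by fastforce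
qed

section \<open>Lowering two entries\<close>

lemma sum_list_list_update:
  "k < length xs \<Longrightarrow> sum_list (xs[k := y]) = sum_list xs + y - xs ! k"
  for xs :: "'a :: ab_group_add list"
  by (induction xs arbitrary: k) (auto simp: nth_Cons split: nat.split)

lemma length_lower_pair [simp]: "length (lower_pair x i j a) = length x"
  by (simp add: lower_pair_def)

lemma nth_lower_pair:
  "i \<noteq> j \<Longrightarrow> k < length x \<Longrightarrow>
    lower_pair x i j a ! k = (if k = i \<or> k = j then x ! k - a else x ! k)"
  by (auto simp: lower_pair_def nth_list_update)

lemma sum_list_lower_pair:
  "i < length x \<Longrightarrow> j < length x \<Longrightarrow> i \<noteq> j \<Longrightarrow> sum_list (lower_pair x i j a) = sum_list x - 2 * a"
  by (simp add: lower_pair_def sum_list_list_update)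

lemma lower_pair_le: "0 \<le> a \<Longrightarrow> i \<noteq> j \<Longrightarrow> k < length x \<Longrightarrow> lower_pair x i j a ! k \<le> x ! k"
  by (simp add: nth_lower_pair)

lemma lower_pair_pos:
  assumes "sorted_wrt (>) x" "\<forall>y \<in> set x. 0 < y" "i < j" "j < length x" "a < x ! j"
  shows "\<forall>y \<in> set (lower_pair x i j a). 0 < y"
proof -
  have "x ! j < x ! i" using assms sorted_wrt_nth_less by blast
  moreover have "\<forall>k < length x. 0 < x ! k" using assms(2) by simp
  ultimately show ?thesis using assms(3-5) by (auto simp: in_set_conv_nth nth_lower_pair)
qed

lemma nth_in_set_lower_pair:
  "k < length x \<Longrightarrow> k \<noteq> i \<Longrightarrow> k \<noteq> j \<Longrightarrow> x ! k \<in> set (lower_pair x i j a)"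
  by (metis length_lower_pair lower_pair_def nth_list_update_neq nth_mem)

lemma set_lower_pair_subset: "set (lower_pair x i j a) \<subseteq> insert (x ! i - a) (insert (x ! j - a) (set x))"
  unfolding lower_pair_def
  using set_update_subset_insert[of "x[i := x ! i - a]" j] set_update_subset_insert[of x i] by blast

lemma nth_notin_set_lower_pair:
  assumes "distinct x" "i < length x" "j < length x" "i \<noteq> j" "x ! j < x ! i" "0 < a"
  shows "x ! i \<notin> set (lower_pair x i j a)"
  using assms by (auto simp: in_set_conv_nth nth_lower_pair nth_eq_iff_index_eq)

lemma lowered_entry_notin_set:
  assumes "distinct (lower_pair x i j a)" "i < length x" "j < length x" "i \<noteq> j" "x ! j < x ! i" "0 < a"
  shows "x ! j - a \<notin> set x"
proof
  assume "x ! j - a \<in> set x"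
  then obtain k where k: "k < length x" "x ! k = x ! j - a" by (auto simp: in_set_conv_nth)
  with assms have "k \<noteq> i" "k \<noteq> j" by auto
  with k assms have "lower_pair x i j a ! k = lower_pair x i j a ! j" by (simp add: nth_lower_pair)
  with assms k \<open>k \<noteq> j\<close> show False by (simp add: nth_eq_iff_index_eq)
qed

text \<open>The lowered list determines the lowering: \<open>a\<close> through the sum of the entries, \<open>x ! i\<close> as an
  entry of \<open>x\<close> that disappears, and \<open>x ! j - a\<close> as the new entry that is not \<open>x ! i - a\<close>.\<close>

lemma lower_pair_inj:
  assumes x: "sorted_wrt (>) x" and ij: "i < j" "j < length x" and ij': "i' < j'" "j' < length x"
    and a: "0 < a" "0 < a'"
    and d: "distinct (lower_pair x i j a)" "distinct (lower_pair x i' j' a')"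
    and eq: "set (lower_pair x i j a) = set (lower_pair x i' j' a')"
  shows "i = i' \<and> j = j' \<and> a = a'"
proof -
  have dx: "distinct x" using x by (rule sorted_wrt_gt_distinct)
  have gt: "x ! j < x ! i" "x ! j' < x ! i'" using x ij ij' sorted_wrt_nth_less by blast+
  have "sum_list (lower_pair x i j a) = sum_list (lower_pair x i' j' a')"
    using d eq by (simp add: distinct_sum_list_conv_Sum)
  then have "a = a'" using ij ij' by (simp add: sum_list_lower_pair)
  have "x ! i \<notin> set (lower_pair x i' j' a')" "x ! i' \<notin> set (lower_pair x i j a)"
    using nth_notin_set_lower_pair[OF dx, of i j a] nth_notin_set_lower_pair[OF dx, of i' j' a']
      ij ij' gt a eq by auto
  then have "i = i' \<or> i = j'" "i' = i \<or> i' = j"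
    using nth_in_set_lower_pair ij ij' by (metis order.strict_trans)+
  with ij ij' have "i = i'" by auto
  have "x ! j - a \<in> set (lower_pair x i' j' a')"
    using eq ij by (metis length_lower_pair nth_lower_pair nth_mem less_irrefl)
  then have "x ! j - a = x ! i' - a' \<or> x ! j - a = x ! j' - a'"
    using set_lower_pair_subset lowered_entry_notin_set[OF d(1)] ij gt a by fastforce
  with \<open>a = a'\<close> \<open>i = i'\<close> gt have "x ! j = x ! j'" by auto
  with dx ij ij' have "j = j'" by (simp add: nth_eq_iff_index_eq)
  with \<open>i = i'\<close> \<open>a = a'\<close> show ?thesis by simp
qed

section \<open>Admissible reflections\<close>

text \<open>The pair \<open>(\<epsilon>\<^sub>i\<^sub>+\<^sub>1 + \<epsilon>\<^sub>j\<^sub>+\<^sub>1, l)\<close> lies in the set of the theorem (indices here are 0-based)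
  iff \<open>admissible_reflection p m lam i j l a\<close> holds for some \<open>a\<close>.\<close>

definition admissible_reflection :: "nat \<Rightarrow> nat \<Rightarrow> int list \<Rightarrow> nat \<Rightarrow> nat \<Rightarrow> int \<Rightarrow> int \<Rightarrow> bool" where
  "admissible_reflection p m lam i j l a \<longleftrightarrow>
     i < j \<and> j < lpart lam \<and> 1 \<le> l \<and> 1 \<le> a \<and>
     coroot_pair (vadd lam (rho m)) (vadd (eps m i) (eps m j)) = a + l * int p \<and>
     0 < vadd lam (rho m) ! j - a \<and>
     \<not> weyl_char_zero m (dot (refl_aff p (vadd (eps m i) (eps m j)) l) lam m)"

lemma admissible_reflection_lower_pair:
  assumes dom: "dominant m lam" and adm: "admissible_reflection p m lam i j l a"
  shows "refl_aff p (vadd (eps m i) (eps m j)) l (vadd lam (rho m)) = lower_pair (vadd lam (rho m)) i j a"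
    and "distinct (lower_pair (vadd lam (rho m)) i j a)"
proof -
  let ?v = "vadd lam (rho m)"
  have ij: "i < m" "j < m" "i \<noteq> j"
    using adm lpart_le_length[of lam] dom by (auto simp: admissible_reflection_def dominant_def)
  moreover have "?v ! i + ?v ! j - l * int p = a"
    using adm coroot_pair_eps_add[OF length_vadd_rho[OF dom] ij] by (simp add: admissible_reflection_def)
  ultimately show refl: "refl_aff p (vadd (eps m i) (eps m j)) l ?v = lower_pair ?v i j a"
    using refl_aff_eps_add[OF length_vadd_rho[OF dom]] by simp
  show "distinct (lower_pair ?v i j a)"
    using adm dom distinct_of_not_weyl_char_zero[of "lower_pair ?v i j a" m]
    by (simp add: admissible_reflection_def dot_def refl dominant_def)
qed

lemma WpD_sorts_lower_pair:
  assumes dom: "dominant m lam" and ij: "i < j" "j < lpart lam"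
    and s: "s = lower_pair (vadd lam (rho m)) i j a" "distinct s" "\<forall>x \<in> set s. 0 < x"
  shows "\<exists>w \<in> WpD p m (lpart lam). w s = sort_desc s"
proof -
  let ?L = "lpart lam"
  have lens: "length s = m" "?L \<le> m"
    using s(1) dom lpart_le_length[of lam] by (simp_all add: length_vadd_rho dominant_def)
  have tail: "\<forall>k. ?L \<le> k \<longrightarrow> k < length s \<longrightarrow> s ! k = int (length s - k)"
    using ij dom lens by (auto simp: s(1) nth_lower_pair nth_vadd_rho length_vadd_rho nth_ge_lpart_eq_0)
  then have "sort_desc s = sort_desc (take ?L s) @ drop ?L s"
    using sort_desc_keeps_tail s(2,3) lens by simp
  then have "\<forall>k. ?L \<le> k \<longrightarrow> k < m \<longrightarrow> s ! k = sort_desc s ! k"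
    using lens by (simp add: nth_append min_def)
  then show ?thesis
    using WpD_permutes_prefix lens s(2) sorted_wrt_gt_distinct[OF sorted_wrt_gt_sort_desc] by simp
qed

lemma admissible_reflection_properties:
  assumes dom: "dominant m lam" and adm: "admissible_reflection p m lam i j l a"
  defines "s \<equiv> refl_aff p (vadd (eps m i) (eps m j)) l (vadd lam (rho m))"
    and "\<mu> \<equiv> vsub (sort_desc (refl_aff p (vadd (eps m i) (eps m j)) l (vadd lam (rho m)))) (rho m)"
  shows "distinct s \<and> (\<forall>x \<in> set s. 0 < x) \<and> dominant m \<mu> \<and> wsubseteq \<mu> lam \<and> \<mu> \<noteq> lam \<and>
    (\<exists>w \<in> WpD p m (lpart lam). \<mu> = dot w lam m)"
proof -
  define v where "v = vadd lam (rho m)"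
  have v: "length v = m" "sorted_wrt (>) v" "\<forall>x \<in> set v. 0 < x"
    using nth_vadd_rho_pos[OF dom] length_vadd_rho[OF dom] sorted_wrt_gt_vadd_rho[OF dom]
    by (auto simp: v_def in_set_conv_nth simp del: length_vadd)
  have ij: "i < j" "j < m" "j < lpart lam" "1 \<le> a" "a < v ! j"
    using adm lpart_le_length[of lam] dom by (auto simp: admissible_reflection_def dominant_def v_def)
  have s: "s = lower_pair v i j a" "distinct s"
    using admissible_reflection_lower_pair[OF dom adm] by (simp_all add: s_def v_def)
  have \<mu>: "\<mu> = vsub (sort_desc s) (rho m)" by (simp add: \<mu>_def s_def)
  have pos: "\<forall>x \<in> set s. 0 < x" using lower_pair_pos v ij s(1) by simp
  have lam: "lam ! k = v ! k - int (m - k)" if "k < m" for k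
    using nth_vadd_rho[OF dom that] by (simp add: v_def)
  have neq: "\<mu> \<noteq> lam"
  proof
    assume "\<mu> = lam"
    then have "sort_desc s = v"
      using dom v(1) s(1) lam by (intro nth_equalityI) (auto simp: \<mu> dominant_def)
    then show False
      using sum_list_sort_desc[of s] sum_list_lower_pair[of i v j a] s(1) ij v(1) by simp
  qed
  have sub: "wsubseteq \<mu> lam"
  proof -
    have "sort_desc s ! k \<le> v ! k" if "k < m" for k
      using sort_desc_nth_le[OF v(2), of s k] lower_pair_le[of a i j _ v] v(1) ij s that by simp
    then show ?thesis
      using dom s(1) v(1) lam by (auto simp: wsubseteq_def list_all2_conv_all_nth \<mu> dominant_def)
  qed
  obtain w where w: "w \<in> WpD p m (lpart lam)" "w s = sort_desc s"
    using WpD_sorts_lower_pair[OF dom ij(1,3) s(1)[unfolded v_def] s(2) pos] by blast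
  have "w \<circ> refl_aff p (vadd (eps m i) (eps m j)) l \<in> WpD p m (lpart lam)"
    using w(1) WpD_comp refl_aff_in_WpD ij by blast
  moreover have "\<mu> = dot (w \<circ> refl_aff p (vadd (eps m i) (eps m j)) l) lam m"
    using w(2) by (simp add: dot_def \<mu>_def s_def)
  ultimately have "\<exists>w \<in> WpD p m (lpart lam). \<mu> = dot w lam m" by blast
  with neq sub s pos show ?thesis
    using dominant_vsub_rho[OF sorted_wrt_gt_sort_desc] v(1) by (simp add: \<mu>)
qed

lemma admissible_reflection_inj:
  assumes dom: "dominant m lam" and "0 < p"
    and adm: "admissible_reflection p m lam i j l a" "admissible_reflection p m lam i' j' l' a'"
    and eq: "vsub (sort_desc (lower_pair (vadd lam (rho m)) i j a)) (rho m) =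
      vsub (sort_desc (lower_pair (vadd lam (rho m)) i' j' a')) (rho m)"
  shows "i = i' \<and> j = j' \<and> l = l'"
proof -
  have "sort_desc (lower_pair (vadd lam (rho m)) i j a) = sort_desc (lower_pair (vadd lam (rho m)) i' j' a')"
    by (rule vsub_rho_inj[OF _ _ eq]) (simp_all add: length_vadd_rho[OF dom] del: length_vadd)
  then have "i = i' \<and> j = j' \<and> a = a'"
  proof (intro lower_pair_inj[OF sorted_wrt_gt_vadd_rho[OF dom]])
    show "set (lower_pair (vadd lam (rho m)) i j a) = set (lower_pair (vadd lam (rho m)) i' j' a')"
      if "sort_desc (lower_pair (vadd lam (rho m)) i j a) = sort_desc (lower_pair (vadd lam (rho m)) i' j' a')"
      using that set_sort_desc by metis
  qed (use adm admissible_reflection_lower_pair[OF dom] dom lpart_le_length[of lam]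
       in \<open>auto simp: admissible_reflection_def length_vadd_rho dominant_def\<close>)
  with adm \<open>0 < p\<close> show ?thesis by (auto simp: admissible_reflection_def)
qed

theorem lemma2p3:
  fixes p m :: nat and lam :: "int list"
  assumes "prime p" and "p > 2" and "m \<ge> 1" and "p_core p m lam"
  defines "A \<equiv> {(\<alpha>, l). \<exists>i j. i < j \<and> j < lpart lam \<and> \<alpha> = vadd (eps m i) (eps m j) \<and> l \<ge> 1 \<and>
                 (\<exists>a::int. a \<ge> 1 \<and> coroot_pair (vadd lam (rho m)) \<alpha> = a + l * int p \<and>
                           vadd lam (rho m) ! j - a > 0) \<and>
                 \<not> weyl_char_zero m (dot (refl_aff p \<alpha> l) lam m)}"
    and "mu \<equiv> (\<lambda>(\<alpha>, l). vsub (sort_desc (refl_aff p \<alpha> l (vadd lam (rho m)))) (rho m))"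
  shows "(\<forall>(\<alpha>, l) \<in> A.
            distinct (refl_aff p \<alpha> l (vadd lam (rho m))) \<and>
            (\<forall>x \<in> set (refl_aff p \<alpha> l (vadd lam (rho m))). x > 0) \<and>
            dominant m (mu (\<alpha>, l)) \<and>
            wsubseteq (mu (\<alpha>, l)) lam \<and> mu (\<alpha>, l) \<noteq> lam \<and>
            (\<exists>w \<in> WpD p m (lpart lam). mu (\<alpha>, l) = dot w lam m))
         \<and> inj_on mu A"
proof -
  have dom: "dominant m lam" using assms(4) by (simp add: p_core_def)
  have A: "A = {(vadd (eps m i) (eps m j), l) | i j l a. admissible_reflection p m lam i j l a}"
    unfolding A_def admissible_reflection_def by fastforce
  have "inj_on mu A"
  proof (rule inj_onI)
    fix x y assume "x \<in> A" "y \<in> A" "mu x = mu y"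
    then obtain i j l a i' j' l' a' where
      adm: "admissible_reflection p m lam i j l a" "admissible_reflection p m lam i' j' l' a'"
      and xy: "x = (vadd (eps m i) (eps m j), l)" "y = (vadd (eps m i') (eps m j'), l')"
      and eq: "vsub (sort_desc (lower_pair (vadd lam (rho m)) i j a)) (rho m) =
           vsub (sort_desc (lower_pair (vadd lam (rho m)) i' j' a')) (rho m)"
      unfolding A mu_def using admissible_reflection_lower_pair[OF dom] by auto
    then have "i = i' \<and> j = j' \<and> l = l'"
      using admissible_reflection_inj[OF dom _ adm] assms(2) by simp
    with xy show "x = y" by simp
  qed
  then show ?thesis
    unfolding A mu_def using admissible_reflection_properties[OF dom] by auto
qed

end
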